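(* Let $I,J\in\mathbb{I}_{m,n}$ and $\ast\in\{ss,cc,tot\}$. Then $\bar d^\ast_{V_J}(I)=1$ if $I\le J$, and $\bar d^\ast_{V_J}(I)=0$ otherwise.
   Context: Fix a field $K$. For integers $m,n\ge1$, $G_{m,n}$ is the equioriented commutative $m\times n$ grid: the quiver with vertex set $\{(i,j):1\le i\le m,\ 1\le j\le n\}$ and arrows $(i,j)\to(i,j+1)$ and $(i,j)\to(i+1,j)$, bound by all commutativity relations; $\mathrm{rep}\,G_{m,n}$ is its category of finite-dimensional representations over $K$ satisfying the relations. An interval of $G_{m,n}$ is a nonempty full subquiver $I$ which is connected (as an undirected graph) and convex (whenever $x,y\in I_0$ and there are paths $x\to z$, $z\to y$ in $G_{m,n}$, then $z\in I_0$); $\mathbb{I}_{m,n}$ is the set of intervals ordered by inclusion of vertex sets. The interval representation $V_I$ has $K$ at vertices of $I$, $0$ elsewhere, identity maps on arrows inside $I$ and zero maps otherwise. Essential vertices: $I^{ss}_0$ is the set of sources and sinks of the quiver $I$; $I^{cc}_0=I_0\cap(\mathrm{pr}_1(I^{ss}_0)\times\mathrm{pr}_2(I^{ss}_0))$ with $\mathrm{pr}_1,\mathrm{pr}_2$ coordinate projections; $I^{tot}_0=I_0$. Let $KG_{m,n}$ be the $K$-linear category whose objects are the vertices and whose morphisms are $K$-linear combinations of paths modulo the commutativity relations; representations of $G_{m,n}$ are $K$-linear functors $KG_{m,n}\to\mathrm{vect}_K$. For $\ast\in\{ss,cc,tot\}$, $\mathcal{C}^\ast_I$ is the full subcategory of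 $KG_{m,n}$ on $I^\ast_0$, and the compression of $M$ is the restriction $M^\ast_I:=M|_{\mathcal{C}^\ast_I}$. The compressed multiplicity $\bar d^\ast_M(I)$ is the multiplicity of the indecomposable $(V_I)^\ast_I$ as a direct summand of $M^\ast_I$ (Krull–Schmidt). *)

theory Defs
  imports "Jordan_Normal_Form.Matrix"
begin

definition grid :: "nat \<Rightarrow> nat \<Rightarrow> (nat \<times> nat) set" where
  "grid m n = {(i, j). 1 \<le> i \<and> i \<le> m \<and> 1 \<le> j \<and> j \<le> n}"

definition arrows :: "nat \<Rightarrow> nat \<Rightarrow> ((nat \<times> nat) \<times> (nat \<times> nat)) set" where
  "arrows m n = {(x, y). x \<in> grid m n \<and> y \<in> grid m n \<and>
      ((fst y = fst x \<and> snd y = Suc (snd x)) \<or> (fst y = Suc (fst x) \<and> snd y = snd x))}"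

definition reach :: "nat \<Rightarrow> nat \<Rightarrow> nat \<times> nat \<Rightarrow> nat \<times> nat \<Rightarrow> bool" where
  "reach m n x y \<longleftrightarrow> x \<in> grid m n \<and> (x, y) \<in> (arrows m n)\<^sup>*"

section \<open>Intervals (identified with their vertex sets; full subquivers)\<close>

definition is_interval :: "nat \<Rightarrow> nat \<Rightarrow> (nat \<times> nat) set \<Rightarrow> bool" where
  "is_interval m n I \<longleftrightarrow>
     I \<noteq> {} \<and> I \<subseteq> grid m n \<and>
     (\<forall>x\<in>I. \<forall>y\<in>I. (x, y) \<in> ((arrows m n \<inter> (I \<times> I)) \<union> (arrows m n \<inter> (I \<times> I))\<inverse>)\<^sup>*) \<and>
     (\<forall>x\<in>I. \<forall>y\<in>I. \<forall>z. reach m n x z \<and> reach m n z y \<longrightarrow> z \<in> I)"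

definition sources_sinks :: "nat \<Rightarrow> nat \<Rightarrow> (nat \<times> nat) set \<Rightarrow> (nat \<times> nat) set" where
  "sources_sinks m n I =
     {x \<in> I. \<not> (\<exists>y\<in>I. (y, x) \<in> arrows m n)} \<union> {x \<in> I. \<not> (\<exists>y\<in>I. (x, y) \<in> arrows m n)}"

datatype ess = SS | CC | TOT

definition ess_vertices :: "nat \<Rightarrow> nat \<Rightarrow> ess \<Rightarrow> (nat \<times> nat) set \<Rightarrow> (nat \<times> nat) set" where
  "ess_vertices m n st I = (case st of
       SS \<Rightarrow> sources_sinks m n I
     | CC \<Rightarrow> I \<inter> (fst ` sources_sinks m n I \<times> snd ` sources_sinks m n I)
     | TOT \<Rightarrow> I)"

text \<open>Hom(x,y) in KG_{m,n} is K (all paths equal modulo commutativity) if there is a path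
  x -> y and 0 otherwise. So a K-linear functor on the full subcategory on S is given by
  vector spaces K^{dimv x} (x in S) and matrices mapv x y for x, y in S with a path x -> y,
  satisfying functoriality.\<close>

record 'k rep =
  dimv :: "nat \<times> nat \<Rightarrow> nat"
  mapv :: "nat \<times> nat \<Rightarrow> nat \<times> nat \<Rightarrow> 'k mat"

definition is_rep :: "nat \<Rightarrow> nat \<Rightarrow> (nat \<times> nat) set \<Rightarrow> ('k::field) rep \<Rightarrow> bool" where
  "is_rep m n S M \<longleftrightarrow>
     (\<forall>x\<in>S. mapv M x x = 1\<^sub>m (dimv M x)) \<and>
     (\<forall>x\<in>S. \<forall>y\<in>S. reach m n x y \<longrightarrow> mapv M x y \<in> carrier_mat (dimv M y) (dimv M x)) \<and>
     (\<forall>x\<in>S. \<forall>y\<in>S. \<forall>z\<in>S. reach m n x y \<and> reach m n y z \<longrightarrow>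
        mapv M y z * mapv M x y = mapv M x z)"

definition rep_iso :: "nat \<Rightarrow> nat \<Rightarrow> (nat \<times> nat) set \<Rightarrow> ('k::field) rep \<Rightarrow> 'k rep \<Rightarrow> bool" where
  "rep_iso m n S M N \<longleftrightarrow>
     (\<exists>f. (\<forall>x\<in>S. f x \<in> carrier_mat (dimv N x) (dimv M x) \<and> invertible_mat (f x)) \<and>
          (\<forall>x\<in>S. \<forall>y\<in>S. reach m n x y \<longrightarrow> f y * mapv M x y = mapv N x y * f x))"

definition zero_rep :: "('k::field) rep" where
  "zero_rep = \<lparr>dimv = (\<lambda>_. 0), mapv = (\<lambda>_ _. 0\<^sub>m 0 0)\<rparr>"

definition dsum2 :: "('k::field) rep \<Rightarrow> 'k rep \<Rightarrow> 'k rep" where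
  "dsum2 A B = \<lparr>dimv = (\<lambda>x. dimv A x + dimv B x),
     mapv = (\<lambda>x y. four_block_mat (mapv A x y) (0\<^sub>m (dimv A y) (dimv B x))
                                   (0\<^sub>m (dimv B y) (dimv A x)) (mapv B x y))\<rparr>"

definition dsum :: "('k::field) rep list \<Rightarrow> 'k rep" where
  "dsum Ns = foldr dsum2 Ns zero_rep"

definition nonzero_rep :: "(nat \<times> nat) set \<Rightarrow> ('k::field) rep \<Rightarrow> bool" where
  "nonzero_rep S M \<longleftrightarrow> (\<exists>x\<in>S. dimv M x \<noteq> 0)"

definition indecomposable :: "nat \<Rightarrow> nat \<Rightarrow> (nat \<times> nat) set \<Rightarrow> ('k::field) rep \<Rightarrow> bool" where
  "indecomposable m n S M \<longleftrightarrow> is_rep m n S M \<and> nonzero_rep S M \<and>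
     \<not> (\<exists>A B. is_rep m n S A \<and> is_rep m n S B \<and> nonzero_rep S A \<and> nonzero_rep S B \<and>
             rep_iso m n S M (dsum2 A B))"

text \<open>Multiplicity of N as a direct summand of M: the number of summands isomorphic to N
  in a decomposition of M into indecomposables (well defined by Krull--Schmidt).\<close>
definition multiplicity_rep :: "nat \<Rightarrow> nat \<Rightarrow> (nat \<times> nat) set \<Rightarrow> ('k::field) rep \<Rightarrow> 'k rep \<Rightarrow> nat" where
  "multiplicity_rep m n S M N = (THE k. \<exists>Ns. (\<forall>L\<in>set Ns. indecomposable m n S L) \<and>
       rep_iso m n S M (dsum Ns) \<and> length (filter (\<lambda>L. rep_iso m n S L N) Ns) = k)"

definition interval_rep :: "(nat \<times> nat) set \<Rightarrow> ('k::field) rep" where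
  "interval_rep I = \<lparr>dimv = (\<lambda>x. if x \<in> I then 1 else 0),
     mapv = (\<lambda>x y. if x \<in> I \<and> y \<in> I then 1\<^sub>m 1
                   else 0\<^sub>m (if y \<in> I then 1 else 0) (if x \<in> I then 1 else 0))\<rparr>"

text \<open>Compressed multiplicity d^*_M(I): multiplicity of (V_I)^*_I in M^*_I, the compressions
  being restrictions to the full subcategory on I^*_0.\<close>
definition compressed_mult :: "nat \<Rightarrow> nat \<Rightarrow> ess \<Rightarrow> ('k::field) rep \<Rightarrow> (nat \<times> nat) set \<Rightarrow> nat" where
  "compressed_mult m n st M I =
     multiplicity_rep m n (ess_vertices m n st I) M (interval_rep I)"

end

theory Submission
  imports Defs
begin

text \<open>The essential vertices S of I contain the sources and sinks of I and lie inside I, and any two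
  of them are joined by a zigzag of comparable vertices of S. If I \<subseteq> J, then V_J and V_I agree
  on S, and V_J restricted to S is indecomposable: an isomorphism onto A \<oplus> B keeps the single
  dimension in the same summand along every comparable pair, hence everywhere. So every
  decomposition of the compression is a single copy of the compression of V_I. If I \<subseteq> J fails,
  convexity of J gives a source or sink of I outside J; there the compression of V_J vanishes
  while that of V_I does not, so no summand of a decomposition (which exists since S is finite)
  is isomorphic to it.\<close>

lemma invertible_mat_iff:
  fixes A :: "'a::semiring_1 mat"
  assumes "A \<in> carrier_mat k k"
  shows "invertible_mat A \<longleftrightarrow> (\<exists>B\<in>carrier_mat k k. A * B = 1\<^sub>m k \<and> B * A = 1\<^sub>m k)"
proof
  assume "invertible_mat A"
  then obtain B where AB: "A * B = 1\<^sub>m k" and BA: "B * A = 1\<^sub>m (dim_row B)"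
    using assms unfolding invertible_mat_def inverts_mat_def by auto
  have "dim_col B = k" using arg_cong[OF AB, of dim_col] by simp
  moreover have "dim_row B = k" using arg_cong[OF BA, of dim_col] assms by simp
  ultimately show "\<exists>B\<in>carrier_mat k k. A * B = 1\<^sub>m k \<and> B * A = 1\<^sub>m k"
    using AB BA by auto
qed (use assms in \<open>auto simp: invertible_mat_def inverts_mat_def\<close>)

lemma invertible_matI:
  fixes A :: "'a::semiring_1 mat"
  assumes "A \<in> carrier_mat k k" "B \<in> carrier_mat k k" "A * B = 1\<^sub>m k" "B * A = 1\<^sub>m k"
  shows "invertible_mat A"
  using assms invertible_mat_iff by blast

lemma invertible_mat_mult:
  fixes A B :: "'a::semiring_1 mat"
  assumes A: "A \<in> carrier_mat k k" "invertible_mat A" and B: "B \<in> carrier_mat k k" "invertible_mat B"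
  shows "invertible_mat (A * B)"
proof -
  obtain A' where A': "A' \<in> carrier_mat k k" "A * A' = 1\<^sub>m k" "A' * A = 1\<^sub>m k"
    using A invertible_mat_iff by blast
  obtain B' where B': "B' \<in> carrier_mat k k" "B * B' = 1\<^sub>m k" "B' * B = 1\<^sub>m k"
    using B invertible_mat_iff by blast
  have "A * B * (B' * A') = A * (B * (B' * A'))"
    by (rule assoc_mult_mat[OF A(1) B(1) mult_carrier_mat[OF B'(1) A'(1)]])
  also have "\<dots> = A * (B * B' * A')"
    using assoc_mult_mat[OF B(1) B'(1) A'(1)] by simp
  also have "\<dots> = 1\<^sub>m k" using A A' B' by simp
  finally have right: "A * B * (B' * A') = 1\<^sub>m k" .
  have "B' * A' * (A * B) = B' * (A' * (A * B))"
    by (rule assoc_mult_mat[OF B'(1) A'(1) mult_carrier_mat[OF A(1) B(1)]])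
  also have "\<dots> = B' * (A' * A * B)"
    using assoc_mult_mat[OF A'(1) A(1) B(1)] by simp
  also have "\<dots> = 1\<^sub>m k" using B A' B' by simp
  finally have left: "B' * A' * (A * B) = 1\<^sub>m k" .
  show ?thesis using invertible_matI[OF _ _ right left] A B A' B' by auto
qed

lemma invertible_four_block_diag_mat:
  fixes A B :: "'a::semiring_1 mat"
  assumes A: "A \<in> carrier_mat a a" "invertible_mat A" and B: "B \<in> carrier_mat b b" "invertible_mat B"
  shows "invertible_mat (four_block_mat A (0\<^sub>m a b) (0\<^sub>m b a) B)"
proof -
  obtain A' where A': "A' \<in> carrier_mat a a" "A * A' = 1\<^sub>m a" "A' * A = 1\<^sub>m a"
    using A invertible_mat_iff by blast
  obtain B' where B': "B' \<in> carrier_mat b b" "B * B' = 1\<^sub>m b" "B' * B = 1\<^sub>m b"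
    using B invertible_mat_iff by blast
  show ?thesis
  proof (rule invertible_matI[of _ "a + b" "four_block_mat A' (0\<^sub>m a b) (0\<^sub>m b a) B'"])
    show "four_block_mat A (0\<^sub>m a b) (0\<^sub>m b a) B * four_block_mat A' (0\<^sub>m a b) (0\<^sub>m b a) B' = 1\<^sub>m (a + b)"
      by (subst mult_four_block_mat[of A a a _ b _ b B A' a _ b]) (use A B A' B' in auto)
    show "four_block_mat A' (0\<^sub>m a b) (0\<^sub>m b a) B' * four_block_mat A (0\<^sub>m a b) (0\<^sub>m b a) B = 1\<^sub>m (a + b)"
      by (subst mult_four_block_mat[of A' a a _ b _ b B' A a _ b]) (use A B A' B' in auto)
  qed (use A B A' B' in auto)
qed

lemma invertible_one_mat: "invertible_mat (1\<^sub>m k :: 'a::semiring_1 mat)"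
  by (rule invertible_matI[of _ k "1\<^sub>m k"]) simp_all

lemma not_invertible_zero_mat:
  assumes "0 < k"
  shows "\<not> invertible_mat (0\<^sub>m k k :: 'a::semiring_1 mat)"
proof
  assume "invertible_mat (0\<^sub>m k k :: 'a mat)"
  then have "(0\<^sub>m k k :: 'a mat) = 1\<^sub>m k"
    using invertible_mat_iff[of "0\<^sub>m k k" k] by auto
  then have "(0\<^sub>m k k :: 'a mat) $$ (0, 0) = 1\<^sub>m k $$ (0, 0)" by simp
  with assms show False by simp
qed

lemma reach_trans: "reach m n x y \<Longrightarrow> reach m n y z \<Longrightarrow> reach m n x z"
  unfolding reach_def by auto

lemma is_rep_mapv_carrier:
  "is_rep m n S M \<Longrightarrow> x \<in> S \<Longrightarrow> y \<in> S \<Longrightarrow> reach m n x y \<Longrightarrow>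
    mapv M x y \<in> carrier_mat (dimv M y) (dimv M x)"
  unfolding is_rep_def by blast

lemma rep_iso_dimv: "rep_iso m n S M N \<Longrightarrow> x \<in> S \<Longrightarrow> dimv N x = dimv M x"
  unfolding rep_iso_def invertible_mat_def square_mat.simps by (metis carrier_matD)

lemma rep_isoI:
  assumes "\<And>x. x \<in> S \<Longrightarrow> dimv N x = dimv M x"
    and "\<And>x. x \<in> S \<Longrightarrow> f x \<in> carrier_mat (dimv M x) (dimv M x)"
    and "\<And>x. x \<in> S \<Longrightarrow> invertible_mat (f x)"
    and "\<And>x y. x \<in> S \<Longrightarrow> y \<in> S \<Longrightarrow> reach m n x y \<Longrightarrow> f y * mapv M x y = mapv N x y * f x"
  shows "rep_iso m n S M N"
  unfolding rep_iso_def using assms by (intro exI[of _ f]) simp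

lemma rep_isoE:
  assumes "rep_iso m n S M N"
  obtains f where "\<And>x. x \<in> S \<Longrightarrow> dimv N x = dimv M x"
    and "\<And>x. x \<in> S \<Longrightarrow> f x \<in> carrier_mat (dimv M x) (dimv M x)"
    and "\<And>x. x \<in> S \<Longrightarrow> invertible_mat (f x)"
    and "\<And>x y. x \<in> S \<Longrightarrow> y \<in> S \<Longrightarrow> reach m n x y \<Longrightarrow> f y * mapv M x y = mapv N x y * f x"
proof -
  obtain f where f: "\<forall>x\<in>S. f x \<in> carrier_mat (dimv N x) (dimv M x) \<and> invertible_mat (f x)"
    "\<forall>x\<in>S. \<forall>y\<in>S. reach m n x y \<longrightarrow> f y * mapv M x y = mapv N x y * f x"
    using assms unfolding rep_iso_def by blast
  show thesis
    by (rule that[of f]) (use f rep_iso_dimv[OF assms] in simp_all)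
qed

lemma rep_iso_of_eq_on:
  assumes M: "is_rep m n S M" and dim: "\<And>x. x \<in> S \<Longrightarrow> dimv N x = dimv M x"
    and map: "\<And>x y. x \<in> S \<Longrightarrow> y \<in> S \<Longrightarrow> reach m n x y \<Longrightarrow> mapv N x y = mapv M x y"
  shows "rep_iso m n S M N"
proof (rule rep_isoI[where f = "\<lambda>x. 1\<^sub>m (dimv M x)"])
  fix x y assume xy: "x \<in> S" "y \<in> S" "reach m n x y"
  then show "1\<^sub>m (dimv M y) * mapv M x y = mapv N x y * 1\<^sub>m (dimv M x)"
    using is_rep_mapv_carrier[OF M xy] map[OF xy] by simp
qed (simp_all add: dim invertible_one_mat)

lemma rep_iso_refl: "is_rep m n S M \<Longrightarrow> rep_iso m n S M M"
  by (rule rep_iso_of_eq_on) auto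

lemma rep_iso_trans:
  assumes A: "is_rep m n S A" and B: "is_rep m n S B" and C: "is_rep m n S C"
    and AB: "rep_iso m n S A B" and BC: "rep_iso m n S B C"
  shows "rep_iso m n S A C"
proof -
  obtain f where dB: "\<And>x. x \<in> S \<Longrightarrow> dimv B x = dimv A x"
    and f: "\<And>x. x \<in> S \<Longrightarrow> f x \<in> carrier_mat (dimv A x) (dimv A x)"
      "\<And>x. x \<in> S \<Longrightarrow> invertible_mat (f x)"
    and fAB: "\<And>x y. x \<in> S \<Longrightarrow> y \<in> S \<Longrightarrow> reach m n x y \<Longrightarrow> f y * mapv A x y = mapv B x y * f x"
    using AB by (rule rep_isoE) blast
  obtain g where dC: "\<And>x. x \<in> S \<Longrightarrow> dimv C x = dimv B x"
    and g: "\<And>x. x \<in> S \<Longrightarrow> g x \<in> carrier_mat (dimv B x) (dimv B x)"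
      "\<And>x. x \<in> S \<Longrightarrow> invertible_mat (g x)"
    and gBC: "\<And>x y. x \<in> S \<Longrightarrow> y \<in> S \<Longrightarrow> reach m n x y \<Longrightarrow> g y * mapv B x y = mapv C x y * g x"
    using BC by (rule rep_isoE) blast
  have g': "g x \<in> carrier_mat (dimv A x) (dimv A x)" if "x \<in> S" for x using g(1)[OF that] dB[OF that] by simp
  show ?thesis
  proof (rule rep_isoI[where f = "\<lambda>x. g x * f x"])
    fix x assume x: "x \<in> S"
    show "dimv C x = dimv A x" using dB[OF x] dC[OF x] by simp
    show "g x * f x \<in> carrier_mat (dimv A x) (dimv A x)" using g'[OF x] f(1)[OF x] by simp
    show "invertible_mat (g x * f x)" by (rule invertible_mat_mult[OF g'[OF x] g(2)[OF x] f[OF x]])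
  next
    fix x y assume xy: "x \<in> S" "y \<in> S" "reach m n x y"
    have mA: "mapv A x y \<in> carrier_mat (dimv A y) (dimv A x)"
      using is_rep_mapv_carrier[OF A xy] .
    have mB: "mapv B x y \<in> carrier_mat (dimv A y) (dimv A x)"
      using is_rep_mapv_carrier[OF B xy] dB xy by simp
    have mC: "mapv C x y \<in> carrier_mat (dimv A y) (dimv A x)"
      using is_rep_mapv_carrier[OF C xy] dB dC xy by simp
    have "g y * f y * mapv A x y = g y * (mapv B x y * f x)"
      using assoc_mult_mat[OF g'[OF xy(2)] f(1)[OF xy(2)] mA] fAB[OF xy] by simp
    also have "\<dots> = mapv C x y * g x * f x"
      using assoc_mult_mat[OF g'[OF xy(2)] mB f(1)[OF xy(1)]] gBC[OF xy] by simp
    also have "\<dots> = mapv C x y * (g x * f x)" by (rule assoc_mult_mat[OF mC g'[OF xy(1)] f(1)[OF xy(1)]])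
    finally show "g y * f y * mapv A x y = mapv C x y * (g x * f x)" .
  qed
qed

lemma rep_iso_sym:
  assumes A: "is_rep m n S A" and B: "is_rep m n S B" and AB: "rep_iso m n S A B"
  shows "rep_iso m n S B A"
proof -
  obtain f where dB: "\<And>x. x \<in> S \<Longrightarrow> dimv B x = dimv A x"
    and f: "\<And>x. x \<in> S \<Longrightarrow> f x \<in> carrier_mat (dimv A x) (dimv A x)"
      "\<And>x. x \<in> S \<Longrightarrow> invertible_mat (f x)"
    and fAB: "\<And>x y. x \<in> S \<Longrightarrow> y \<in> S \<Longrightarrow> reach m n x y \<Longrightarrow> f y * mapv A x y = mapv B x y * f x"
    using AB by (rule rep_isoE) blast
  have "\<exists>g. g \<in> carrier_mat (dimv A x) (dimv A x) \<and> f x * g = 1\<^sub>m (dimv A x) \<and> g * f x = 1\<^sub>m (dimv A x)"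
    if "x \<in> S" for x
    using f[OF that] invertible_mat_iff by blast
  then obtain g where g: "\<And>x. x \<in> S \<Longrightarrow> g x \<in> carrier_mat (dimv A x) (dimv A x)"
      "\<And>x. x \<in> S \<Longrightarrow> f x * g x = 1\<^sub>m (dimv A x)" "\<And>x. x \<in> S \<Longrightarrow> g x * f x = 1\<^sub>m (dimv A x)"
    by metis
  show ?thesis
  proof (rule rep_isoI[where f = g])
    fix x assume x: "x \<in> S"
    then show "dimv A x = dimv B x" and "g x \<in> carrier_mat (dimv B x) (dimv B x)"
      using dB[OF x] g(1)[OF x] by simp_all
    show "invertible_mat (g x)" by (rule invertible_matI[OF g(1)[OF x] f(1)[OF x] g(3)[OF x] g(2)[OF x]])
  next
    fix x y assume xy: "x \<in> S" "y \<in> S" "reach m n x y"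
    have mA: "mapv A x y \<in> carrier_mat (dimv A y) (dimv A x)"
      using is_rep_mapv_carrier[OF A xy] .
    have mB: "mapv B x y \<in> carrier_mat (dimv A y) (dimv A x)"
      using is_rep_mapv_carrier[OF B xy] dB xy by simp
    have gyB: "g y * mapv B x y \<in> carrier_mat (dimv A y) (dimv A x)" using g(1)[OF xy(2)] mB by simp
    have "g y * mapv B x y = g y * mapv B x y * (f x * g x)"
      using g(2)[OF xy(1)] right_mult_one_mat[OF gyB] by simp
    also have "\<dots> = g y * mapv B x y * f x * g x"
      by (rule assoc_mult_mat[OF gyB f(1)[OF xy(1)] g(1)[OF xy(1)], symmetric])
    also have "\<dots> = g y * (f y * mapv A x y) * g x"
      using assoc_mult_mat[OF g(1)[OF xy(2)] mB f(1)[OF xy(1)]] fAB[OF xy] by simp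
    also have "\<dots> = mapv A x y * g x"
      using assoc_mult_mat[OF g(1)[OF xy(2)] f(1)[OF xy(2)] mA] g(3)[OF xy(2)] mA by simp
    finally show "g y * mapv B x y = mapv A x y * g x" .
  qed
qed

lemma dimv_dsum2 [simp]: "dimv (dsum2 A B) x = dimv A x + dimv B x"
  unfolding dsum2_def by simp

lemma mapv_dsum2:
  "mapv (dsum2 A B) x y = four_block_mat (mapv A x y) (0\<^sub>m (dimv A y) (dimv B x))
     (0\<^sub>m (dimv B y) (dimv A x)) (mapv B x y)"
  unfolding dsum2_def by simp

lemma dimv_zero_rep [simp]: "dimv zero_rep x = 0"
  and mapv_zero_rep [simp]: "mapv zero_rep x y = 0\<^sub>m 0 0"
  unfolding zero_rep_def by simp_all

lemma dsum_Nil [simp]: "dsum [] = zero_rep"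
  and dsum_Cons [simp]: "dsum (L # Ns) = dsum2 L (dsum Ns)"
  unfolding dsum_def by simp_all

lemma dimv_le_dimv_dsum: "L \<in> set Ns \<Longrightarrow> dimv L x \<le> dimv (dsum Ns) x"
  by (induct Ns) auto

lemma four_block_mat_zero_right: "A \<in> carrier_mat a b \<Longrightarrow> four_block_mat A (0\<^sub>m a 0) (0\<^sub>m 0 b) (0\<^sub>m 0 0) = A"
  by (rule eq_matI) auto

lemma four_block_mat_zero_left: "A \<in> carrier_mat a b \<Longrightarrow> four_block_mat (0\<^sub>m 0 0) (0\<^sub>m 0 b) (0\<^sub>m a 0) A = A"
  by (rule eq_matI) auto

lemma one_mat_0: "(1\<^sub>m 0 :: 'a::semiring_1 mat) = 0\<^sub>m 0 0"
  by (rule eq_matI) auto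

lemma is_rep_zero_rep: "is_rep m n S (zero_rep :: 'a::field rep)"
  unfolding is_rep_def by (simp add: one_mat_0)

lemma is_rep_dsum2:
  assumes A: "is_rep m n S A" and B: "is_rep m n S B"
  shows "is_rep m n S (dsum2 A B)"
  unfolding is_rep_def
proof (intro conjI ballI impI)
  fix x assume "x \<in> S"
  then show "mapv (dsum2 A B) x x = 1\<^sub>m (dimv (dsum2 A B) x)"
    using A B unfolding is_rep_def mapv_dsum2 by simp
next
  fix x y assume "x \<in> S" "y \<in> S" "reach m n x y"
  then show "mapv (dsum2 A B) x y \<in> carrier_mat (dimv (dsum2 A B) y) (dimv (dsum2 A B) x)"
    using is_rep_mapv_carrier[OF A] is_rep_mapv_carrier[OF B] by (auto simp: mapv_dsum2)
next
  fix x y z assume S: "x \<in> S" "y \<in> S" "z \<in> S" and r: "reach m n x y \<and> reach m n y z"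
  then have "reach m n x z" using reach_trans by blast
  with S r have "mapv A x y \<in> carrier_mat (dimv A y) (dimv A x)"
    "mapv A y z \<in> carrier_mat (dimv A z) (dimv A y)" "mapv A x z \<in> carrier_mat (dimv A z) (dimv A x)"
    "mapv B x y \<in> carrier_mat (dimv B y) (dimv B x)"
    "mapv B y z \<in> carrier_mat (dimv B z) (dimv B y)" "mapv B x z \<in> carrier_mat (dimv B z) (dimv B x)"
    "mapv A y z * mapv A x y = mapv A x z" "mapv B y z * mapv B x y = mapv B x z"
    using A B unfolding is_rep_def by blast+
  then show "mapv (dsum2 A B) y z * mapv (dsum2 A B) x y = mapv (dsum2 A B) x z"
    unfolding mapv_dsum2 by (subst mult_four_block_mat) auto
qed

lemma is_rep_dsum: "(\<And>L. L \<in> set Ns \<Longrightarrow> is_rep m n S L) \<Longrightarrow> is_rep m n S (dsum Ns)"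
  by (induct Ns) (simp_all add: is_rep_zero_rep is_rep_dsum2)

lemma rep_iso_dsum_single:
  assumes A: "is_rep m n S A"
  shows "rep_iso m n S A (dsum [A])"
proof (rule rep_iso_of_eq_on[OF A])
  fix x y assume "x \<in> S" "y \<in> S" "reach m n x y"
  then show "mapv (dsum [A]) x y = mapv A x y"
    using four_block_mat_zero_right[OF is_rep_mapv_carrier[OF A]] by (simp add: mapv_dsum2)
qed simp

lemma rep_iso_zero_rep_dsum2:
  assumes A: "is_rep m n S A"
  shows "rep_iso m n S (dsum2 zero_rep A) A"
proof (rule rep_iso_of_eq_on[OF is_rep_dsum2[OF is_rep_zero_rep A]])
  fix x y assume "x \<in> S" "y \<in> S" "reach m n x y"
  then show "mapv A x y = mapv (dsum2 zero_rep A) x y"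
    using four_block_mat_zero_left[OF is_rep_mapv_carrier[OF A]] by (simp add: mapv_dsum2)
qed simp

lemma rep_iso_dsum2_assoc:
  assumes A: "is_rep m n S A" and B: "is_rep m n S B" and C: "is_rep m n S C"
  shows "rep_iso m n S (dsum2 (dsum2 A B) C) (dsum2 A (dsum2 B C))"
proof (rule rep_iso_of_eq_on)
  show "is_rep m n S (dsum2 (dsum2 A B) C)" using A B C by (intro is_rep_dsum2)
next
  fix x y assume xy: "x \<in> S" "y \<in> S" "reach m n x y"
  then show "mapv (dsum2 A (dsum2 B C)) x y = mapv (dsum2 (dsum2 A B) C) x y"
    using assoc_four_block_mat[of "mapv A x y" "mapv B x y" "mapv C x y"]
      is_rep_mapv_carrier[OF A xy] is_rep_mapv_carrier[OF B xy] is_rep_mapv_carrier[OF C xy]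
    by (simp add: mapv_dsum2)
qed simp

lemma rep_iso_dsum2_cong:
  assumes A: "is_rep m n S A" and A': "is_rep m n S A'" and B: "is_rep m n S B" and B': "is_rep m n S B'"
    and AA': "rep_iso m n S A A'" and BB': "rep_iso m n S B B'"
  shows "rep_iso m n S (dsum2 A B) (dsum2 A' B')"
proof -
  obtain f where dA: "\<And>x. x \<in> S \<Longrightarrow> dimv A' x = dimv A x"
    and f: "\<And>x. x \<in> S \<Longrightarrow> f x \<in> carrier_mat (dimv A x) (dimv A x)"
      "\<And>x. x \<in> S \<Longrightarrow> invertible_mat (f x)"
    and fA: "\<And>x y. x \<in> S \<Longrightarrow> y \<in> S \<Longrightarrow> reach m n x y \<Longrightarrow> f y * mapv A x y = mapv A' x y * f x"
    using AA' by (rule rep_isoE) blast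
  obtain g where dB: "\<And>x. x \<in> S \<Longrightarrow> dimv B' x = dimv B x"
    and g: "\<And>x. x \<in> S \<Longrightarrow> g x \<in> carrier_mat (dimv B x) (dimv B x)"
      "\<And>x. x \<in> S \<Longrightarrow> invertible_mat (g x)"
    and gB: "\<And>x y. x \<in> S \<Longrightarrow> y \<in> S \<Longrightarrow> reach m n x y \<Longrightarrow> g y * mapv B x y = mapv B' x y * g x"
    using BB' by (rule rep_isoE) blast
  define h where "h x = four_block_mat (f x) (0\<^sub>m (dimv A x) (dimv B x)) (0\<^sub>m (dimv B x) (dimv A x)) (g x)" for x
  show ?thesis
  proof (rule rep_isoI[where f = h])
    fix x assume x: "x \<in> S"
    show "dimv (dsum2 A' B') x = dimv (dsum2 A B) x" using dA[OF x] dB[OF x] by simp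
    show "h x \<in> carrier_mat (dimv (dsum2 A B) x) (dimv (dsum2 A B) x)"
      unfolding h_def using f(1)[OF x] g(1)[OF x] by simp
    show "invertible_mat (h x)"
      unfolding h_def by (rule invertible_four_block_diag_mat[OF f[OF x] g[OF x]])
  next
    fix x y assume xy: "x \<in> S" "y \<in> S" "reach m n x y"
    have mA: "mapv A x y \<in> carrier_mat (dimv A y) (dimv A x)"
      and mB: "mapv B x y \<in> carrier_mat (dimv B y) (dimv B x)"
      using is_rep_mapv_carrier[OF A xy] is_rep_mapv_carrier[OF B xy] .
    have mA': "mapv A' x y \<in> carrier_mat (dimv A y) (dimv A x)"
      and mB': "mapv B' x y \<in> carrier_mat (dimv B y) (dimv B x)"
      using is_rep_mapv_carrier[OF A' xy] is_rep_mapv_carrier[OF B' xy] dA dB xy by simp_all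
    have "h y * mapv (dsum2 A B) x y =
        four_block_mat (f y * mapv A x y) (0\<^sub>m (dimv A y) (dimv B x)) (0\<^sub>m (dimv B y) (dimv A x))
          (g y * mapv B x y)"
      unfolding h_def mapv_dsum2
      by (subst mult_four_block_mat[OF f(1)[OF xy(2)] _ _ g(1)[OF xy(2)] mA _ _ mB])
        (use mA mB f(1)[OF xy(2)] g(1)[OF xy(2)] in simp_all)
    also have "\<dots> = mapv (dsum2 A' B') x y * h x"
      unfolding h_def mapv_dsum2 dA[OF xy(1)] dA[OF xy(2)] dB[OF xy(1)] dB[OF xy(2)] fA[OF xy] gB[OF xy]
      by (subst mult_four_block_mat[OF mA' _ _ mB' f(1)[OF xy(1)] _ _ g(1)[OF xy(1)]])
        (use mA' mB' f(1)[OF xy(1)] g(1)[OF xy(1)] in simp_all)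
    finally show "h y * mapv (dsum2 A B) x y = mapv (dsum2 A' B') x y * h x" .
  qed
qed

lemma rep_iso_dsum_append:
  assumes X: "\<And>L. L \<in> set X \<Longrightarrow> is_rep m n S L" and Y: "\<And>L. L \<in> set Y \<Longrightarrow> is_rep m n S L"
  shows "rep_iso m n S (dsum2 (dsum X) (dsum Y)) (dsum (X @ Y))"
  using X
proof (induct X)
  case Nil
  then show ?case using rep_iso_zero_rep_dsum2[OF is_rep_dsum[OF Y]] by simp
next
  case (Cons L X)
  have rL: "is_rep m n S L" using Cons.prems by simp
  have rX: "is_rep m n S (dsum X)" by (rule is_rep_dsum) (use Cons.prems in simp)
  have rY: "is_rep m n S (dsum Y)" by (rule is_rep_dsum[OF Y])
  have rXY: "is_rep m n S (dsum (X @ Y))" by (rule is_rep_dsum) (use Cons.prems Y in auto)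
  have "rep_iso m n S (dsum2 (dsum2 L (dsum X)) (dsum Y)) (dsum2 L (dsum2 (dsum X) (dsum Y)))"
    by (rule rep_iso_dsum2_assoc[OF rL rX rY])
  moreover have "rep_iso m n S (dsum2 L (dsum2 (dsum X) (dsum Y))) (dsum2 L (dsum (X @ Y)))"
    using Cons.hyps Cons.prems
    by (intro rep_iso_dsum2_cong[OF rL rL is_rep_dsum2[OF rX rY] rXY rep_iso_refl[OF rL]]) simp
  ultimately show ?case
    using rep_iso_trans[OF is_rep_dsum2[OF is_rep_dsum2[OF rL rX] rY] is_rep_dsum2[OF rL is_rep_dsum2[OF rX rY]]
        is_rep_dsum2[OF rL rXY]] by simp
qed

lemma rep_iso_zero_rep:
  assumes M: "is_rep m n S M" and "\<And>x. x \<in> S \<Longrightarrow> dimv M x = 0"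
  shows "rep_iso m n S M zero_rep"
proof (rule rep_iso_of_eq_on[OF M])
  fix x y assume xy: "x \<in> S" "y \<in> S" "reach m n x y"
  then have "mapv M x y \<in> carrier_mat 0 0" using is_rep_mapv_carrier[OF M xy] assms(2) by simp
  then show "mapv zero_rep x y = mapv M x y" by (intro eq_matI) auto
qed (use assms(2) in simp)

lemma sum_dimv_less_if_dsum2:
  assumes "finite S" and "\<And>x. x \<in> S \<Longrightarrow> dimv M x = dimv A x + dimv B x" and "nonzero_rep S B"
  shows "(\<Sum>x\<in>S. dimv A x) < (\<Sum>x\<in>S. dimv M x)"
proof -
  obtain b where "b \<in> S" "dimv B b \<noteq> 0" using assms(3) unfolding nonzero_rep_def by blast
  then have "(\<Sum>x\<in>S. dimv A x) < (\<Sum>x\<in>S. dimv A x + dimv B x)"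
    using assms(1) by (intro sum_strict_mono_ex1) auto
  then show ?thesis using assms(2) by simp
qed

lemma indecomposable_decomposition_exists:
  assumes "finite S" and "is_rep m n S (M :: 'a::field rep)"
  shows "\<exists>Ns. (\<forall>L\<in>set Ns. indecomposable m n S L) \<and> rep_iso m n S M (dsum Ns)"
  using assms(2)
proof (induct "\<Sum>x\<in>S. dimv M x" arbitrary: M rule: less_induct)
  case less
  consider "\<not> nonzero_rep S M" | "indecomposable m n S M"
    | A B where "is_rep m n S A" "is_rep m n S B" "nonzero_rep S A" "nonzero_rep S B"
        "rep_iso m n S M (dsum2 A B)"
    using less.prems unfolding indecomposable_def by blast
  then show ?case
  proof cases
    case 1
    then have "rep_iso m n S M (dsum [])"
      using rep_iso_zero_rep[OF less.prems] unfolding nonzero_rep_def by simp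
    then show ?thesis by (intro exI[of _ "[]"]) simp
  next
    case 2
    then show ?thesis using rep_iso_dsum_single[OF less.prems] by (intro exI[of _ "[M]"]) simp
  next
    case 3
    note A = \<open>is_rep m n S A\<close> and B = \<open>is_rep m n S B\<close> and MAB = \<open>rep_iso m n S M (dsum2 A B)\<close>
    have dim: "dimv M x = dimv A x + dimv B x" "dimv M x = dimv B x + dimv A x" if "x \<in> S" for x
      using rep_iso_dimv[OF MAB that] by simp_all
    obtain NA where NA: "\<forall>L\<in>set NA. indecomposable m n S L" "rep_iso m n S A (dsum NA)"
      using less.hyps[OF sum_dimv_less_if_dsum2[OF assms(1) dim(1) 3(4)] A] by blast
    obtain NB where NB: "\<forall>L\<in>set NB. indecomposable m n S L" "rep_iso m n S B (dsum NB)"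
      using less.hyps[OF sum_dimv_less_if_dsum2[OF assms(1) dim(2) 3(3)] B] by blast
    have NA': "is_rep m n S L" if "L \<in> set NA" for L using NA that unfolding indecomposable_def by blast
    have NB': "is_rep m n S L" if "L \<in> set NB" for L using NB that unfolding indecomposable_def by blast
    have rNA: "is_rep m n S (dsum NA)" and rNB: "is_rep m n S (dsum NB)"
      using is_rep_dsum NA' NB' by blast+
    have rAB: "is_rep m n S (dsum2 A B)" and rNAB: "is_rep m n S (dsum2 (dsum NA) (dsum NB))"
      using is_rep_dsum2 A B rNA rNB by blast+
    have rNANB: "is_rep m n S (dsum (NA @ NB))" by (rule is_rep_dsum) (use NA' NB' in auto)
    have "rep_iso m n S (dsum2 A B) (dsum (NA @ NB))"
      using rep_iso_trans[OF rAB rNAB rNANB rep_iso_dsum2_cong[OF A rNA B rNB NA(2) NB(2)]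
          rep_iso_dsum_append[OF NA' NB']] .
    then have "rep_iso m n S M (dsum (NA @ NB))" by (rule rep_iso_trans[OF less.prems rAB rNANB MAB])
    moreover have "\<forall>L\<in>set (NA @ NB). indecomposable m n S L" using NA NB by auto
    ultimately show ?thesis by blast
  qed
qed

lemma indecomposable_decomposition_singleton:
  assumes M: "indecomposable m n S M" and Ns: "\<forall>L\<in>set Ns. indecomposable m n S L"
    and MNs: "rep_iso m n S M (dsum Ns)"
  shows "\<exists>L. Ns = [L]"
proof (cases Ns)
  case Nil
  obtain x where "x \<in> S" "dimv M x \<noteq> 0" using M unfolding indecomposable_def nonzero_rep_def by blast
  then show ?thesis using rep_iso_dimv[OF MNs] Nil by simp
next
  case (Cons L rest)
  have "rest = []"
  proof (rule ccontr)
    assume "rest \<noteq> []"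
    then obtain L' where "L' \<in> set rest" by (cases rest) auto
    then obtain x where x: "x \<in> S" "dimv L' x \<noteq> 0"
      using Ns Cons unfolding indecomposable_def nonzero_rep_def by auto
    moreover have "dimv L' x \<le> dimv (dsum rest) x"
      using \<open>L' \<in> set rest\<close> by (rule dimv_le_dimv_dsum)
    ultimately have "nonzero_rep S (dsum rest)" unfolding nonzero_rep_def by (intro bexI[OF _ x(1)]) simp
    moreover have "is_rep m n S (dsum rest)" using Ns Cons unfolding indecomposable_def
      by (intro is_rep_dsum) auto
    ultimately show False using M Ns MNs Cons unfolding indecomposable_def by auto
  qed
  then show ?thesis using Cons by blast
qed

lemma multiplicity_rep_indecomposable:
  assumes M: "indecomposable m n S M" and N: "is_rep m n S N" and MN: "rep_iso m n S M N"
  shows "multiplicity_rep m n S M N = 1"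
  unfolding multiplicity_rep_def
proof (rule the_equality)
  have M': "is_rep m n S M" using M unfolding indecomposable_def by blast
  show "\<exists>Ns. (\<forall>L\<in>set Ns. indecomposable m n S L) \<and> rep_iso m n S M (dsum Ns) \<and>
      length (filter (\<lambda>L. rep_iso m n S L N) Ns) = 1"
    using M MN rep_iso_dsum_single[OF M'] by (intro exI[of _ "[M]"]) simp
next
  fix k assume "\<exists>Ns. (\<forall>L\<in>set Ns. indecomposable m n S L) \<and> rep_iso m n S M (dsum Ns) \<and>
      length (filter (\<lambda>L. rep_iso m n S L N) Ns) = k"
  then obtain Ns where Ns: "\<forall>L\<in>set Ns. indecomposable m n S L" "rep_iso m n S M (dsum Ns)"
    and k: "length (filter (\<lambda>L. rep_iso m n S L N) Ns) = k" by blast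
  obtain L where L: "Ns = [L]" using indecomposable_decomposition_singleton[OF M Ns] by blast
  have M': "is_rep m n S M" and L': "is_rep m n S L"
    using M Ns L unfolding indecomposable_def by auto
  have L1: "is_rep m n S (dsum [L])" by (rule is_rep_dsum) (use L' in simp)
  have "rep_iso m n S L M"
    using rep_iso_trans[OF L' L1 M' rep_iso_dsum_single[OF L'] rep_iso_sym[OF M' L1 Ns(2)[unfolded L]]] .
  then have "rep_iso m n S L N" by (rule rep_iso_trans[OF L' M' N _ MN])
  then show "k = 1" using k unfolding L by simp
qed

lemma multiplicity_rep_eq_0:
  assumes "finite S" and M: "is_rep m n S M"
    and x: "x \<in> S" "dimv M x = 0" "dimv N x \<noteq> 0"
  shows "multiplicity_rep m n S M N = 0"
proof -
  have no_summand: "filter (\<lambda>L. rep_iso m n S L N) Ns = []" if "rep_iso m n S M (dsum Ns)" for Ns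
  proof -
    have "dimv L x = 0" if "L \<in> set Ns" for L
      using dimv_le_dimv_dsum[OF that, of x] rep_iso_dimv[OF \<open>rep_iso m n S M (dsum Ns)\<close> x(1)] x(2)
      by simp
    then show ?thesis using rep_iso_dimv[of m n S _ N, OF _ x(1)] x(3) by (auto simp: filter_empty_conv)
  qed
  show ?thesis
    unfolding multiplicity_rep_def
    using indecomposable_decomposition_exists[OF assms(1) M] no_summand by (intro the_equality) auto
qed

lemma finite_grid: "finite (grid m n)"
proof -
  have "grid m n \<subseteq> {1..m} \<times> {1..n}" unfolding grid_def by auto
  then show ?thesis by (rule finite_subset) simp
qed

lemma arrow_reach: "(x, y) \<in> arrows m n \<Longrightarrow> reach m n x y"
  unfolding reach_def arrows_def by auto

lemma sources_sinks_subset: "sources_sinks m n I \<subseteq> I"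
  unfolding sources_sinks_def by auto

lemma sources_sinks_below:
  assumes "I \<subseteq> grid m n" and "v \<in> I"
  shows "\<exists>s\<in>sources_sinks m n I. reach m n s v"
  using assms(2)
proof (induct "fst v + snd v" arbitrary: v rule: less_induct)
  case less
  show ?case
  proof (cases "\<exists>y\<in>I. (y, v) \<in> arrows m n")
    case False
    then show ?thesis using less.prems assms(1) unfolding sources_sinks_def reach_def by blast
  next
    case True
    then obtain y where y: "y \<in> I" "(y, v) \<in> arrows m n" by blast
    then have "fst y + snd y < fst v + snd v" unfolding arrows_def by auto
    then show ?thesis using less.hyps y reach_trans arrow_reach by blast
  qed
qed

lemma sources_sinks_above:
  assumes "I \<subseteq> grid m n" and "v \<in> I"
  shows "\<exists>t\<in>sources_sinks m n I. reach m n v t"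
  using assms(2)
proof (induct "m + n - (fst v + snd v)" arbitrary: v rule: less_induct)
  case less
  show ?case
  proof (cases "\<exists>y\<in>I. (v, y) \<in> arrows m n")
    case False
    then show ?thesis using less.prems assms(1) unfolding sources_sinks_def reach_def by blast
  next
    case True
    then obtain y where y: "y \<in> I" "(v, y) \<in> arrows m n" by blast
    then have "m + n - (fst y + snd y) < m + n - (fst v + snd v)"
      unfolding arrows_def grid_def by auto
    then show ?thesis using less.hyps y reach_trans arrow_reach by blast
  qed
qed

lemma interval_subset_if_sources_sinks_subset:
  assumes "I \<subseteq> grid m n" and J: "is_interval m n J" and "sources_sinks m n I \<subseteq> J"
  shows "I \<subseteq> J"
proof
  fix v assume "v \<in> I"
  then obtain s t where "s \<in> sources_sinks m n I" "reach m n s v" "t \<in> sources_sinks m n I" "reach m n v t"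
    using sources_sinks_below sources_sinks_above assms(1) by metis
  then show "v \<in> J" using J assms(3) unfolding is_interval_def by blast
qed

definition comparable :: "nat \<Rightarrow> nat \<Rightarrow> (nat \<times> nat) set \<Rightarrow> ((nat \<times> nat) \<times> (nat \<times> nat)) set" where
  "comparable m n S = {(x, y). x \<in> S \<and> y \<in> S \<and> (reach m n x y \<or> reach m n y x)}"

text \<open>Along an undirected path in I one keeps a source or sink below the current vertex; a backward
  arrow z \<rightarrow> y is bridged through a source or sink above y.\<close>

lemma zigzag_connected_if_sources_sinks_subset:
  assumes I: "is_interval m n I" and SS: "sources_sinks m n I \<subseteq> S" and SI: "S \<subseteq> I"
    and u: "u \<in> S" and v: "v \<in> S"
  shows "(u, v) \<in> (comparable m n S)\<^sup>*"
proof -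
  let ?R = "comparable m n S" and ?E = "arrows m n \<inter> (I \<times> I)"
  have grid: "I \<subseteq> grid m n" using I unfolding is_interval_def by blast
  have walk: "\<exists>s'\<in>sources_sinks m n I. reach m n s' y \<and> (s, s') \<in> ?R\<^sup>*"
    if "(x, y) \<in> (?E \<union> ?E\<inverse>)\<^sup>*" "s \<in> sources_sinks m n I" "reach m n s x" for x y s
    using that(1)
  proof (induct rule: rtrancl_induct)
    case base
    then show ?case using that by blast
  next
    case (step y z)
    then obtain s' where s': "s' \<in> sources_sinks m n I" "reach m n s' y" "(s, s') \<in> ?R\<^sup>*" by blast
    show ?case
    proof (cases "(y, z) \<in> ?E")
      case True
      then show ?thesis using s' reach_trans arrow_reach by blast
    next
      case False
      then have zy: "(z, y) \<in> ?E" using step(2) by blast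
      obtain s'' where s'': "s'' \<in> sources_sinks m n I" "reach m n s'' z"
        using sources_sinks_below[OF grid] zy by blast
      obtain t where t: "t \<in> sources_sinks m n I" "reach m n y t"
        using sources_sinks_above[OF grid] zy by blast
      have "(s', t) \<in> ?R" "(t, s'') \<in> ?R"
        using s' s'' t zy SS reach_trans arrow_reach unfolding comparable_def by blast+
      then have "(s, s'') \<in> ?R\<^sup>*" using s'(3) by (meson rtrancl.rtrancl_into_rtrancl)
      then show ?thesis using s'' by blast
    qed
  qed
  obtain su where su: "su \<in> sources_sinks m n I" "reach m n su u"
    using sources_sinks_below[OF grid] u SI by blast
  have "(u, v) \<in> (?E \<union> ?E\<inverse>)\<^sup>*" using I u v SI unfolding is_interval_def by blast
  then obtain sv where sv: "sv \<in> sources_sinks m n I" "reach m n sv v" "(su, sv) \<in> ?R\<^sup>*"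
    using walk su by blast
  have "(u, su) \<in> ?R" "(sv, v) \<in> ?R" using su sv u v SS unfolding comparable_def by blast+
  then show ?thesis using sv(3) by (meson converse_rtrancl_into_rtrancl rtrancl.rtrancl_into_rtrancl)
qed

lemma ess_vertices_bounds: "sources_sinks m n I \<subseteq> ess_vertices m n st I" "ess_vertices m n st I \<subseteq> I"
  using sources_sinks_subset[of m n I] unfolding ess_vertices_def by (cases st; force)+

lemma dimv_interval_rep [simp]: "dimv (interval_rep J) x = (if x \<in> J then 1 else 0)"
  unfolding interval_rep_def by simp

lemma mapv_interval_rep:
  "mapv (interval_rep J) x y = (if x \<in> J \<and> y \<in> J then 1\<^sub>m 1
     else 0\<^sub>m (if y \<in> J then 1 else 0) (if x \<in> J then 1 else 0))"
  unfolding interval_rep_def by simp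

lemma is_rep_interval_rep:
  assumes J: "is_interval m n J"
  shows "is_rep m n S (interval_rep J :: 'a::field rep)"
proof -
  have "mapv (interval_rep J) y z * mapv (interval_rep J) x y = (mapv (interval_rep J) x z :: 'a mat)"
    if "reach m n x y" "reach m n y z" for x y z
  proof -
    have "x \<in> J \<Longrightarrow> z \<in> J \<Longrightarrow> y \<in> J" using J that unfolding is_interval_def by blast
    then show ?thesis by (cases "x \<in> J"; cases "y \<in> J"; cases "z \<in> J") (auto simp: mapv_interval_rep)
  qed
  then show ?thesis unfolding is_rep_def by (auto simp: mapv_interval_rep one_mat_0)
qed

text \<open>Over S \<subseteq> J the isomorphism V_J \<cong> A \<oplus> B consists of invertible 1 \<times> 1 matrices; if the one
  dimension sat in A at y and in B at z, the map of A \<oplus> B along y \<rightarrow> z would vanish, while that of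
  V_J is the identity.\<close>

lemma interval_rep_iso_dsum2_dimv_eq:
  assumes A: "is_rep m n S A" and B: "is_rep m n S B" and SJ: "S \<subseteq> J"
    and iso: "rep_iso m n S (interval_rep J :: 'a::field rep) (dsum2 A B)"
    and yz: "y \<in> S" "z \<in> S" "reach m n y z"
  shows "dimv A y = dimv A z"
proof (rule ccontr)
  assume neq: "dimv A y \<noteq> dimv A z"
  obtain f where dim': "\<And>x. x \<in> S \<Longrightarrow> dimv (dsum2 A B) x = dimv (interval_rep J :: 'a rep) x"
    and f: "\<And>x. x \<in> S \<Longrightarrow> f x \<in> carrier_mat (dimv (interval_rep J :: 'a rep) x) (dimv (interval_rep J :: 'a rep) x)"
      "\<And>x. x \<in> S \<Longrightarrow> invertible_mat (f x)"
    and fV: "\<And>x y. x \<in> S \<Longrightarrow> y \<in> S \<Longrightarrow> reach m n x y \<Longrightarrow>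
      f y * mapv (interval_rep J) x y = mapv (dsum2 A B) x y * f x"
    using iso by (rule rep_isoE) blast
  have J: "y \<in> J" "z \<in> J" using yz SJ by auto
  have dim: "dimv A x + dimv B x = 1" if "x \<in> S" "x \<in> J" for x
    using dim'[OF that(1)] that(2) by simp
  have fy: "f y \<in> carrier_mat 1 1" and fz: "f z \<in> carrier_mat 1 1"
    using f(1)[OF yz(1)] f(1)[OF yz(2)] J by simp_all
  have "mapv A y z \<in> carrier_mat (dimv A z) (dimv A y)" "mapv B y z \<in> carrier_mat (dimv B z) (dimv B y)"
    using is_rep_mapv_carrier[OF A yz] is_rep_mapv_carrier[OF B yz] .
  then have "mapv (dsum2 A B) y z = 0\<^sub>m 1 1"
    using dim[OF yz(1) J(1)] dim[OF yz(2) J(2)] neq unfolding mapv_dsum2 by (intro eq_matI) auto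
  then have "f z = 0\<^sub>m 1 1"
    using fV[OF yz] fy fz J by (simp add: mapv_interval_rep)
  moreover have "\<not> invertible_mat (0\<^sub>m 1 1 :: 'a mat)" by (rule not_invertible_zero_mat) simp
  ultimately show False using f(2)[OF yz(2)] by simp
qed

lemma indecomposable_interval_rep:
  assumes J: "is_interval m n J" and "S \<noteq> {}" and SJ: "S \<subseteq> J"
    and connected: "\<And>u v. u \<in> S \<Longrightarrow> v \<in> S \<Longrightarrow> (u, v) \<in> (comparable m n S)\<^sup>*"
  shows "indecomposable m n S (interval_rep J :: 'a::field rep)"
  unfolding indecomposable_def
proof (intro conjI notI)
  show "is_rep m n S (interval_rep J :: 'a rep)" by (rule is_rep_interval_rep[OF J])
  show "nonzero_rep S (interval_rep J :: 'a rep)"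
    using assms(2) SJ unfolding nonzero_rep_def by auto
next
  assume "\<exists>A B. is_rep m n S A \<and> is_rep m n S B \<and> nonzero_rep S A \<and> nonzero_rep S B \<and>
    rep_iso m n S (interval_rep J :: 'a rep) (dsum2 A B)"
  then obtain A B where A: "is_rep m n S A" and B: "is_rep m n S B"
    and nzA: "nonzero_rep S A" and nzB: "nonzero_rep S B"
    and iso: "rep_iso m n S (interval_rep J :: 'a rep) (dsum2 A B)" by blast
  have step: "dimv A u = dimv A v" if "(u, v) \<in> comparable m n S" for u v
  proof -
    have "u \<in> S" "v \<in> S" "reach m n u v \<or> reach m n v u"
      using that unfolding comparable_def by simp_all
    then show ?thesis using interval_rep_iso_dsum2_dimv_eq[OF A B SJ iso] by metis
  qed
  have const: "dimv A u = dimv A v" if "u \<in> S" "v \<in> S" for u v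
    using connected[OF that] by (induct rule: rtrancl_induct) (auto dest: step)
  obtain a where a: "a \<in> S" "dimv A a \<noteq> 0" using nzA unfolding nonzero_rep_def by blast
  obtain b where b: "b \<in> S" "dimv B b \<noteq> 0" using nzB unfolding nonzero_rep_def by blast
  have "dimv A b + dimv B b = 1" "dimv A a + dimv B a = 1"
    using rep_iso_dimv[OF iso] a b SJ by auto
  then show False using const[OF a(1) b(1)] a b by simp
qed

lemma multiplicity_interval_rep_if_subset:
  assumes I: "is_interval m n I" and J: "is_interval m n J" and "I \<subseteq> J"
    and SS: "sources_sinks m n I \<subseteq> S" and SI: "S \<subseteq> I"
  shows "multiplicity_rep m n S (interval_rep J :: 'a::field rep) (interval_rep I) = 1"
proof -
  have grid: "I \<subseteq> grid m n" and "I \<noteq> {}" using I unfolding is_interval_def by blast+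
  then obtain v where "v \<in> I" by blast
  then obtain s where "s \<in> sources_sinks m n I" using sources_sinks_below[OF grid] by blast
  then have "S \<noteq> {}" using SS by blast
  then have "indecomposable m n S (interval_rep J :: 'a rep)"
    using SI \<open>I \<subseteq> J\<close> zigzag_connected_if_sources_sinks_subset[OF I SS SI]
    by (intro indecomposable_interval_rep[OF J]) auto
  moreover have "rep_iso m n S (interval_rep J :: 'a rep) (interval_rep I)"
    using SI \<open>I \<subseteq> J\<close> by (intro rep_iso_of_eq_on is_rep_interval_rep[OF J])
      (auto simp: mapv_interval_rep)
  ultimately show ?thesis by (rule multiplicity_rep_indecomposable[OF _ is_rep_interval_rep[OF I]])
qed

lemma multiplicity_interval_rep_if_not_subset:
  assumes I: "is_interval m n I" and J: "is_interval m n J" and "\<not> I \<subseteq> J"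
    and SS: "sources_sinks m n I \<subseteq> S" and SI: "S \<subseteq> I"
  shows "multiplicity_rep m n S (interval_rep J :: 'a::field rep) (interval_rep I) = 0"
proof -
  have grid: "I \<subseteq> grid m n" using I unfolding is_interval_def by blast
  obtain x where x: "x \<in> sources_sinks m n I" "x \<notin> J"
    using interval_subset_if_sources_sinks_subset[OF grid J] \<open>\<not> I \<subseteq> J\<close> by blast
  have "finite S" using finite_subset[OF _ finite_grid] SI grid by blast
  moreover have "x \<in> S" using x(1) SS by blast
  ultimately show ?thesis
    by (rule multiplicity_rep_eq_0[OF _ is_rep_interval_rep[OF J]]) (use x(2) \<open>x \<in> S\<close> SI in auto)
qed

theorem mainTheorem9:
  fixes m n :: nat and I J :: "(nat \<times> nat) set" and st :: ess
  assumes "1 \<le> m" and "1 \<le> n"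
    and "is_interval m n I" and "is_interval m n J"
  shows "compressed_mult m n st (interval_rep J :: ('k::field) rep) I = (if I \<subseteq> J then 1 else 0)"
proof (cases "I \<subseteq> J")
  case True
  have "multiplicity_rep m n (ess_vertices m n st I) (interval_rep J :: 'k rep) (interval_rep I) = 1"
    by (rule multiplicity_interval_rep_if_subset[OF assms(3,4) True ess_vertices_bounds])
  with True show ?thesis unfolding compressed_mult_def by simp
next
  case False
  have "multiplicity_rep m n (ess_vertices m n st I) (interval_rep J :: 'k rep) (interval_rep I) = 0"
    by (rule multiplicity_interval_rep_if_not_subset[OF assms(3,4) False ess_vertices_bounds])
  with False show ?thesis unfolding compressed_mult_def by simp
qed

end
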